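(* Fix positive integers $n_x,n_y$, space steps $\delta x,\delta y>0$ and a time step $\delta t>0$, and consider grid functions on the doubly periodic grid of cells $(i,j)$, $i\in\mathbb{Z}/n_x\mathbb{Z}$, $j\in\mathbb{Z}/n_y\mathbb{Z}$ (periodic boundary conditions). Let $K:(0,\infty)\to(0,\infty)$ be smooth, let $F$ satisfy $F'(\varrho)=\sqrt{K(\varrho)\varrho}$, and let $F_0:(0,\infty)\to\mathbb{R}$ be smooth with pressure $p(\varrho)=\varrho F_0'(\varrho)-F_0(\varrho)$. Define the entropy $$\bar{\mathcal{E}}(\varrho,{\bf u},{\bf w})=\frac{\varrho}{2}\bigl(|{\bf u}|^2+|{\bf w}|^2\bigr)+F_0(\varrho),\qquad \varrho>0,\ {\bf u},{\bf w}\in\mathbb{R}^2.$$ Given data $(\varrho^n_{i,j},{\bf u}^n_{i,j},{\bf w}^n_{i,j})$ with $\varrho^n_{i,j}>0$, consider the scheme $$\frac{\varrho_{i,j}^{n+1}-\varrho_{i,j}^n}{\delta t}+d_1(\mathcal{F}_{\varrho,1}^n)_{i,j}+d_2(\mathcal{F}_{\varrho,2}^n)_{i,j}=0,$$ $$\frac{(\varrho{\bf u})_{i,j}^{n+1}-(\varrho{\bf u})_{i,j}^n}{\delta t}+d_1(\mathcal{F}_{{\bf u},1}^n)_{i,j}+d_2(\mathcal{F}_{{\bf u},2}^n)_{i,j}=\bigl(\mathcal{T}_h(\varrho^{n+1}){\bf w}^{n+1}\bigr)_{i,j},$$ $$\frac{(\varrho{\bf w})_{i,j}^{n+1}-(\varrho{\bf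 w})_{i,j}^n}{\delta t}+d_1(\mathcal{F}_{{\bf w},1}^n)_{i,j}+d_2(\mathcal{F}_{{\bf w},2}^n)_{i,j}=-\bigl(\mathcal{T}_h(\varrho^{n+1}){\bf u}^{n+1}\bigr)_{i,j},$$ where $(\varrho{\bf u})^{k}_{i,j}=\varrho^k_{i,j}{\bf u}^k_{i,j}$, $(\varrho{\bf w})^{k}_{i,j}=\varrho^k_{i,j}{\bf w}^k_{i,j}$, the numerical fluxes $\mathcal{F}^n$ are the Rusanov fluxes evaluated at time level $n$ (described in the context), and $\mathcal{T}_h$ is the discrete capillary operator described in the context. Assume that the hyperbolic scheme (the same scheme with $F\equiv 0$, i.e. with zero right-hand sides) is entropy stable, i.e. $\sum_{i,j}\bar{\mathcal{E}}$ does not increase from time level $n$ to time level $n+1$ under it. Then any solution $(\varrho^{n+1},{\bf u}^{n+1},{\bf w}^{n+1})$ of the full scheme with $\varrho^{n+1}_{i,j}>0$ satisfies $$\sum_{i,j}\bar{\mathcal{E}}(\varrho_{i,j}^{n+1},{\bf u}_{i,j}^{n+1},{\bf w}_{i,j}^{n+1})\le\sum_{i,j}\bar{\mathcal{E}}(\varrho_{i,j}^{n},{\bf u}_{i,j}^{n},{\bf w}_{i,j}^{n}),$$ the sums running over all cells of the periodic grid.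
   Context: This is a discretization of the extended Euler–Korteweg system $\partial_t\varrho+{\rm div}(\varrho{\bf u})=0$, $\partial_t(\varrho{\bf u})+{\rm div}(\varrho{\bf u}\otimes{\bf u})+\nabla p(\varrho)=\mathcal{T}(\varrho){\bf w}$, $\partial_t(\varrho{\bf w})+{\rm div}(\varrho{\bf w}\otimes{\bf u})=-\mathcal{T}(\varrho){\bf u}$ in two space dimensions, where $\mathcal{T}(\varrho){\bf v}={\rm div}(F(\varrho)\nabla{\bf v}^T)+\nabla\bigl((\varrho F'(\varrho)-F(\varrho)){\rm div}\,{\bf v}\bigr)$. Finite difference operators (indices in $\mathbb{Z}/n_x\mathbb{Z}$, $\mathbb{Z}/n_y\mathbb{Z}$, half-integer indices denote cell interfaces): $(d_1 u)_{i,j}=\frac{u_{i+1/2,j}-u_{i-1/2,j}}{\delta x}$, $(d_1^+u)_{i+1/2,j}=\frac{u_{i+1,j}-u_{i,j}}{\delta x}$, $(\bar d_1u)_{i,j}=\frac{u_{i+1,j}-u_{i-1,j}}{2\delta x}$, $(d_2 u)_{i,j}=\frac{u_{i,j+1/2}-u_{i,j-1/2}}{\delta y}$, $(d_2^+u)_{i,j+1/2}=\frac{u_{i,j+1}-u_{i,j}}{\delta y}$, $(\bar d_2 u)_{i,j}=\frac{u_{i,j+1}-u_{i,j-1}}{2\delta y}$. Discrete capillary operator: for a grid density $\varrho>0$ and a grid vector field ${\bf v}=({\bf v}_1,{\bf v}_2)$, $(\mathcal{T}_h(\varrho){\bf v})_{i,j}$ has first component $d_1\bigl(\varrho F'(\varrho)\,d_1^+{\bf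 v}_1\bigr)_{i,j}+\bar d_2\bigl(F(\varrho)\,\bar d_1{\bf v}_2\bigr)_{i,j}+\bar d_1\bigl((\varrho F'(\varrho)-F(\varrho))\,\bar d_2{\bf v}_2\bigr)_{i,j}$ and second component $\bar d_1\bigl(F(\varrho)\,\bar d_2{\bf v}_1\bigr)_{i,j}+\bar d_2\bigl((\varrho F'(\varrho)-F(\varrho))\,\bar d_1{\bf v}_1\bigr)_{i,j}+d_2\bigl(\varrho F'(\varrho)\,d_2^+{\bf v}_2\bigr)_{i,j}$, where $F(\varrho)$, $\varrho F'(\varrho)-F(\varrho)$ are evaluated cellwise, and $\varrho F'(\varrho)$ at interfaces $(i+1/2,j)$, $(i,j+1/2)$ denotes some interface value computed from $\varrho$ (e.g. an average of neighbouring cell values). Rusanov fluxes: with conservative state $U=(\varrho,\varrho{\bf u},\varrho{\bf w})$ and physical fluxes $f_k(U)=(\varrho u_k,\ \varrho u_k{\bf u}+p(\varrho){\bf e}_k,\ \varrho u_k{\bf w})$ for $k=1,2$, the interface flux in direction $1$ is $\mathcal{F}_{1,i+1/2,j}=\frac12\bigl(f_1(U_{i,j})+f_1(U_{i+1,j})\bigr)-\frac{c_{i+1/2,j}}{2}(U_{i+1,j}-U_{i,j})$ with a local wave-speed bound $c_{i+1/2,j}$, all evaluated at time level $n$, and similarly in direction $2$; $(\mathcal{F}_{\varrho,k},\mathcal{F}_{{\bf u},k},\mathcal{F}_{{\bf w},k})$ are the components of $\mathcal{F}_k$. Thus convection is treated explicitly and capillary terms implicitly; the new velocities are ${\bf u}^{n+1}=(\varrho{\bf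 u})^{n+1}/\varrho^{n+1}$, ${\bf w}^{n+1}=(\varrho{\bf w})^{n+1}/\varrho^{n+1}$. *)

theory Defs
  imports "HOL-Analysis.Analysis"
begin

definition smooth_on :: "real set \<Rightarrow> (real \<Rightarrow> real) \<Rightarrow> bool" where
  "smooth_on S f \<longleftrightarrow> (\<forall>k. ((deriv ^^ k) f) differentiable_on S)"

text \<open>Cells are indexed by i < nx, j < ny (representatives of Z/nx x Z/ny).
  A quantity at the interface (i+1/2, j) is stored at index (i, j);
  a quantity at the interface (i, j+1/2) is stored at index (i, j).\<close>

type_synonym 'a grid = "nat \<Rightarrow> nat \<Rightarrow> 'a"

definition ip :: "nat \<Rightarrow> nat \<Rightarrow> nat" where "ip n i = Suc i mod n"
definition im :: "nat \<Rightarrow> nat \<Rightarrow> nat" where "im n i = (i + n - 1) mod n"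

definition d1 :: "nat \<Rightarrow> real \<Rightarrow> ('a::real_vector) grid \<Rightarrow> 'a grid" where
  "d1 nx dx a i j = (1 / dx) *\<^sub>R (a i j - a (im nx i) j)"
definition d1p :: "nat \<Rightarrow> real \<Rightarrow> ('a::real_vector) grid \<Rightarrow> 'a grid" where
  "d1p nx dx v i j = (1 / dx) *\<^sub>R (v (ip nx i) j - v i j)"
definition d1bar :: "nat \<Rightarrow> real \<Rightarrow> ('a::real_vector) grid \<Rightarrow> 'a grid" where
  "d1bar nx dx v i j = (1 / (2 * dx)) *\<^sub>R (v (ip nx i) j - v (im nx i) j)"
definition d2 :: "nat \<Rightarrow> real \<Rightarrow> ('a::real_vector) grid \<Rightarrow> 'a grid" where
  "d2 ny dy a i j = (1 / dy) *\<^sub>R (a i j - a i (im ny j))"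
definition d2p :: "nat \<Rightarrow> real \<Rightarrow> ('a::real_vector) grid \<Rightarrow> 'a grid" where
  "d2p ny dy v i j = (1 / dy) *\<^sub>R (v i (ip ny j) - v i j)"
definition d2bar :: "nat \<Rightarrow> real \<Rightarrow> ('a::real_vector) grid \<Rightarrow> 'a grid" where
  "d2bar ny dy v i j = (1 / (2 * dy)) *\<^sub>R (v i (ip ny j) - v i (im ny j))"

text \<open>Fp is F' (= sqrt (K rho * rho)); iface a b is the interface value of rho F'(rho)
  computed from the densities a, b of the two neighbouring cells.\<close>
definition capT ::
  "nat \<Rightarrow> nat \<Rightarrow> real \<Rightarrow> real \<Rightarrow> (real \<Rightarrow> real) \<Rightarrow> (real \<Rightarrow> real) \<Rightarrow> (real \<Rightarrow> real \<Rightarrow> real)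
    \<Rightarrow> real grid \<Rightarrow> (real \<times> real) grid \<Rightarrow> (real \<times> real) grid" where
  "capT nx ny dx dy F Fp iface \<rho> v i j =
    (let v1 = (\<lambda>i j. fst (v i j)); v2 = (\<lambda>i j. snd (v i j));
         Fc = (\<lambda>i j. F (\<rho> i j));
         Gc = (\<lambda>i j. \<rho> i j * Fp (\<rho> i j) - F (\<rho> i j));
         A1 = (\<lambda>i j. iface (\<rho> i j) (\<rho> (ip nx i) j));
         A2 = (\<lambda>i j. iface (\<rho> i j) (\<rho> i (ip ny j)))
     in ( d1 nx dx (\<lambda>i j. A1 i j * d1p nx dx v1 i j) i j
          + d2bar ny dy (\<lambda>i j. Fc i j * d1bar nx dx v2 i j) i j
          + d1bar nx dx (\<lambda>i j. Gc i j * d2bar ny dy v2 i j) i j,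
          d1bar nx dx (\<lambda>i j. Fc i j * d2bar ny dy v1 i j) i j
          + d2bar ny dy (\<lambda>i j. Gc i j * d1bar nx dx v1 i j) i j
          + d2 ny dy (\<lambda>i j. A2 i j * d2p ny dy v2 i j) i j))"

type_synonym cstate = "real \<times> (real \<times> real) \<times> (real \<times> real)"

definition vcomp :: "nat \<Rightarrow> real \<times> real \<Rightarrow> real" where
  "vcomp k v = (if k = 1 then fst v else snd v)"
definition evec :: "nat \<Rightarrow> real \<times> real" where
  "evec k = (if k = 1 then (1, 0) else (0, 1))"

definition consv :: "real \<Rightarrow> real \<times> real \<Rightarrow> real \<times> real \<Rightarrow> cstate" where
  "consv \<rho> u w = (\<rho>, \<rho> *\<^sub>R u, \<rho> *\<^sub>R w)"
definition physf :: "(real \<Rightarrow> real) \<Rightarrow> nat \<Rightarrow> real \<Rightarrow> real \<times> real \<Rightarrow> real \<times> real \<Rightarrow> cstate" where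
  "physf p k \<rho> u w =
     (\<rho> * vcomp k u, (\<rho> * vcomp k u) *\<^sub>R u + p \<rho> *\<^sub>R evec k, (\<rho> * vcomp k u) *\<^sub>R w)"

text \<open>Interface fluxes F_{1,i+1/2,j} (stored at (i,j)) and F_{2,i,j+1/2} (stored at (i,j)),
  with local wave speed bounds c1, c2 at the interfaces.\<close>
definition rus1 :: "nat \<Rightarrow> (real \<Rightarrow> real) \<Rightarrow> real grid \<Rightarrow> real grid \<Rightarrow> (real\<times>real) grid
     \<Rightarrow> (real\<times>real) grid \<Rightarrow> cstate grid" where
  "rus1 nx p c1 \<rho> u w i j =
     (1/2) *\<^sub>R (physf p 1 (\<rho> i j) (u i j) (w i j) + physf p 1 (\<rho> (ip nx i) j) (u (ip nx i) j) (w (ip nx i) j))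
     - (c1 i j / 2) *\<^sub>R (consv (\<rho> (ip nx i) j) (u (ip nx i) j) (w (ip nx i) j) - consv (\<rho> i j) (u i j) (w i j))"
definition rus2 :: "nat \<Rightarrow> (real \<Rightarrow> real) \<Rightarrow> real grid \<Rightarrow> real grid \<Rightarrow> (real\<times>real) grid
     \<Rightarrow> (real\<times>real) grid \<Rightarrow> cstate grid" where
  "rus2 ny p c2 \<rho> u w i j =
     (1/2) *\<^sub>R (physf p 2 (\<rho> i j) (u i j) (w i j) + physf p 2 (\<rho> i (ip ny j)) (u i (ip ny j)) (w i (ip ny j)))
     - (c2 i j / 2) *\<^sub>R (consv (\<rho> i (ip ny j)) (u i (ip ny j)) (w i (ip ny j)) - consv (\<rho> i j) (u i j) (w i j))"

text \<open>Convection explicit at level n (\<rho>, u, w), new level (\<rho>', u', w'); right-hand sides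
  Ru (momentum u-equation) and Rw (w-equation).\<close>
definition step_eqs ::
  "nat \<Rightarrow> nat \<Rightarrow> real \<Rightarrow> real \<Rightarrow> real \<Rightarrow> (real \<Rightarrow> real) \<Rightarrow> real grid \<Rightarrow> real grid
   \<Rightarrow> real grid \<Rightarrow> (real\<times>real) grid \<Rightarrow> (real\<times>real) grid
   \<Rightarrow> real grid \<Rightarrow> (real\<times>real) grid \<Rightarrow> (real\<times>real) grid
   \<Rightarrow> (real\<times>real) grid \<Rightarrow> (real\<times>real) grid \<Rightarrow> bool" where
  "step_eqs nx ny dx dy dt p c1 c2 \<rho> u w \<rho>' u' w' Ru Rw \<longleftrightarrow>
    (\<forall>i<nx. \<forall>j<ny.
      (let D = d1 nx dx (rus1 nx p c1 \<rho> u w) i j + d2 ny dy (rus2 ny p c2 \<rho> u w) i j in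
        (\<rho>' i j - \<rho> i j) / dt + fst D = 0
      \<and> (1 / dt) *\<^sub>R (\<rho>' i j *\<^sub>R u' i j - \<rho> i j *\<^sub>R u i j) + fst (snd D) = Ru i j
      \<and> (1 / dt) *\<^sub>R (\<rho>' i j *\<^sub>R w' i j - \<rho> i j *\<^sub>R w i j) + snd (snd D) = Rw i j))"

definition entropy :: "(real \<Rightarrow> real) \<Rightarrow> real \<Rightarrow> real \<times> real \<Rightarrow> real \<times> real \<Rightarrow> real" where
  "entropy F0 \<rho> u w = \<rho> / 2 * ((norm u)\<^sup>2 + (norm w)\<^sup>2) + F0 \<rho>"

definition total_entropy ::
  "nat \<Rightarrow> nat \<Rightarrow> (real \<Rightarrow> real) \<Rightarrow> real grid \<Rightarrow> (real\<times>real) grid \<Rightarrow> (real\<times>real) grid \<Rightarrow> real" where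
  "total_entropy nx ny F0 \<rho> u w = (\<Sum>i<nx. \<Sum>j<ny. entropy F0 (\<rho> i j) (u i j) (w i j))"

end

theory Submission
  imports Defs
begin

text \<open>Moving the capillary right-hand sides into the new velocities,
  \<open>\<hat>u = u' - (\<delta>t/\<rho>') T\<^sub>h(\<rho>') w'\<close> and \<open>\<hat>w = w' + (\<delta>t/\<rho>') T\<^sub>h(\<rho>') u'\<close>,
  gives a solution \<open>(\<rho>', \<hat>u, \<hat>w)\<close> of the hyperbolic scheme, whose entropy is at most the
  entropy at level \<open>n\<close>. Expanding the kinetic energy, the entropy of \<open>(\<rho>', \<hat>u, \<hat>w)\<close>
  exceeds that of \<open>(\<rho>', u', w')\<close> by a nonnegative square plus
  \<open>\<delta>t \<Sigma> (w'\<cdot>T\<^sub>h u' - u'\<cdot>T\<^sub>h w')\<close>, and this cross term vanishes because periodic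
  summation by parts makes \<open>T\<^sub>h(\<rho>)\<close> symmetric for the grid inner product.\<close>

lemma ip_less: "0 < n \<Longrightarrow> ip n i < n"
  by (simp add: ip_def)

lemma im_less: "0 < n \<Longrightarrow> im n i < n"
  by (simp add: im_def)

lemma ip_im: "i < n \<Longrightarrow> ip n (im n i) = i"
  by (cases i) (simp_all add: ip_def im_def)

lemma im_ip: "i < n \<Longrightarrow> im n (ip n i) = i"
  by (cases "Suc i = n") (simp_all add: ip_def im_def)

lemma bij_betw_ip: "0 < n \<Longrightarrow> bij_betw (ip n) {..<n} {..<n}"
  by (intro bij_betw_byWitness[where f' = "im n"]) (auto simp: ip_im im_ip ip_less im_less)

lemma sum_mult_im_shift:
  fixes a g :: "nat \<Rightarrow> 'a::semiring_0"
  assumes "0 < n"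
  shows "(\<Sum>i<n. a i * g (im n i)) = (\<Sum>i<n. a (ip n i) * g i)"
proof -
  have "(\<Sum>i<n. a i * g (im n i)) = (\<Sum>i<n. a (ip n i) * g (im n (ip n i)))"
    using sum.reindex_bij_betw[OF bij_betw_ip[OF assms], of "\<lambda>k. a k * g (im n k)"] by simp
  also have "\<dots> = (\<Sum>i<n. a (ip n i) * g i)"
    by (rule sum.cong) (auto simp: im_ip)
  finally show ?thesis .
qed

lemma sum_mult_ip_shift:
  fixes a g :: "nat \<Rightarrow> 'a::semiring_0"
  assumes "0 < n"
  shows "(\<Sum>i<n. a i * g (ip n i)) = (\<Sum>i<n. a (im n i) * g i)"
proof -
  have "(\<Sum>i<n. a (im n i) * g (ip n (im n i))) = (\<Sum>i<n. a (im n (ip n i)) * g (ip n i))"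
    by (rule sum_mult_im_shift[OF assms])
  moreover have "(\<Sum>i<n. a (im n i) * g (ip n (im n i))) = (\<Sum>i<n. a (im n i) * g i)"
    by (rule sum.cong) (auto simp: ip_im)
  moreover have "(\<Sum>i<n. a (im n (ip n i)) * g (ip n i)) = (\<Sum>i<n. a i * g (ip n i))"
    by (rule sum.cong) (auto simp: im_ip)
  ultimately show ?thesis
    by simp
qed

lemma grid_sum_mult_d1:
  fixes a g :: "'a::real_algebra grid"
  assumes "0 < nx"
  shows "(\<Sum>i<nx. \<Sum>j<ny. a i j * d1 nx dx g i j) = - (\<Sum>i<nx. \<Sum>j<ny. d1p nx dx a i j * g i j)"
proof -
  have "(\<Sum>i<nx. a i j * g (im nx i) j) = (\<Sum>i<nx. a (ip nx i) j * g i j)" for j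
    using sum_mult_im_shift[OF assms, of "\<lambda>i. a i j" "\<lambda>i. g i j"] .
  then show ?thesis
    by (subst (1 2) sum.swap)
      (simp add: d1_def d1p_def algebra_simps sum_subtractf sum_negf flip: scaleR_sum_right)
qed

lemma grid_sum_mult_d1bar:
  fixes a g :: "'a::real_algebra grid"
  assumes "0 < nx"
  shows "(\<Sum>i<nx. \<Sum>j<ny. a i j * d1bar nx dx g i j) = - (\<Sum>i<nx. \<Sum>j<ny. d1bar nx dx a i j * g i j)"
proof -
  have "(\<Sum>i<nx. a i j * g (im nx i) j) = (\<Sum>i<nx. a (ip nx i) j * g i j)"
    "(\<Sum>i<nx. a i j * g (ip nx i) j) = (\<Sum>i<nx. a (im nx i) j * g i j)" for j
    using sum_mult_im_shift[OF assms, of "\<lambda>i. a i j" "\<lambda>i. g i j"]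
      sum_mult_ip_shift[OF assms, of "\<lambda>i. a i j" "\<lambda>i. g i j"] by simp_all
  then show ?thesis
    by (subst (1 2) sum.swap)
      (simp add: d1bar_def algebra_simps sum_subtractf sum_negf flip: scaleR_sum_right)
qed

lemma grid_sum_mult_d2:
  fixes a g :: "'a::real_algebra grid"
  assumes "0 < ny"
  shows "(\<Sum>i<nx. \<Sum>j<ny. a i j * d2 ny dy g i j) = - (\<Sum>i<nx. \<Sum>j<ny. d2p ny dy a i j * g i j)"
proof -
  have "(\<Sum>j<ny. a i j * g i (im ny j)) = (\<Sum>j<ny. a i (ip ny j) * g i j)" for i
    using sum_mult_im_shift[OF assms, of "a i" "g i"] .
  then show ?thesis
    by (simp add: d2_def d2p_def algebra_simps sum_subtractf sum_negf flip: scaleR_sum_right)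
qed

lemma grid_sum_mult_d2bar:
  fixes a g :: "'a::real_algebra grid"
  assumes "0 < ny"
  shows "(\<Sum>i<nx. \<Sum>j<ny. a i j * d2bar ny dy g i j) = - (\<Sum>i<nx. \<Sum>j<ny. d2bar ny dy a i j * g i j)"
proof -
  have "(\<Sum>j<ny. a i j * g i (im ny j)) = (\<Sum>j<ny. a i (ip ny j) * g i j)"
    "(\<Sum>j<ny. a i j * g i (ip ny j)) = (\<Sum>j<ny. a i (im ny j) * g i j)" for i
    using sum_mult_im_shift[OF assms, of "a i" "g i"] sum_mult_ip_shift[OF assms, of "a i" "g i"]
    by simp_all
  then show ?thesis
    by (simp add: d2bar_def algebra_simps sum_subtractf sum_negf flip: scaleR_sum_right)
qed

text \<open>Summation by parts turns both sides into one bilinear form in the discrete derivatives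
  of \<open>a\<close> and \<open>v\<close>, symmetric in \<open>a\<close> and \<open>v\<close>.\<close>
lemma grid_sum_inner_capT_symmetric:
  assumes nx: "0 < nx" and ny: "0 < ny"
  shows "(\<Sum>i<nx. \<Sum>j<ny. a i j \<bullet> capT nx ny dx dy F Fp iface \<rho> v i j)
       = (\<Sum>i<nx. \<Sum>j<ny. v i j \<bullet> capT nx ny dx dy F Fp iface \<rho> a i j)"
  by (simp only: capT_def Let_def inner_prod_def inner_real_def fst_conv snd_conv
      distrib_left sum.distrib grid_sum_mult_d1[OF nx] grid_sum_mult_d2[OF ny]
      grid_sum_mult_d1bar[OF nx] grid_sum_mult_d2bar[OF ny])
    (simp add: mult_ac)

lemma step_eqs_absorb_rhs:
  assumes "step_eqs nx ny dx dy dt p c1 c2 \<rho> u w \<rho>' u' w' Ru Rw"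
    and "dt \<noteq> 0" and "\<forall>i<nx. \<forall>j<ny. \<rho>' i j \<noteq> 0"
  shows "step_eqs nx ny dx dy dt p c1 c2 \<rho> u w \<rho>'
           (\<lambda>i j. u' i j - (dt / \<rho>' i j) *\<^sub>R Ru i j) (\<lambda>i j. w' i j - (dt / \<rho>' i j) *\<^sub>R Rw i j)
           (\<lambda>i j. 0) (\<lambda>i j. 0)"
proof -
  have absorb: "(1 / dt) *\<^sub>R (r *\<^sub>R (x - (dt / r) *\<^sub>R y) - z) = (1 / dt) *\<^sub>R (r *\<^sub>R x - z) - y"
    if "r \<noteq> 0" for r and x y z :: "real \<times> real"
    using that \<open>dt \<noteq> 0\<close> by (simp add: algebra_simps)
  show ?thesis
    using assms unfolding step_eqs_def Let_def by (simp add: absorb algebra_simps)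
qed

lemma entropy_shift_ge:
  assumes "r > 0"
  shows "entropy F0 r u w - dt * (u \<bullet> R + w \<bullet> Q)
           \<le> entropy F0 r (u - (dt / r) *\<^sub>R R) (w - (dt / r) *\<^sub>R Q)"
proof -
  have expand: "r / 2 * (norm (x - (dt / r) *\<^sub>R y))\<^sup>2
      = r / 2 * (norm x)\<^sup>2 - dt * (x \<bullet> y) + dt\<^sup>2 / (2 * r) * (norm y)\<^sup>2" for x y :: "real \<times> real"
    unfolding power2_norm_eq_inner using assms
    by (simp add: inner_diff_left inner_diff_right inner_commute field_simps power2_eq_square)
  have "0 \<le> dt\<^sup>2 / (2 * r) * ((norm R)\<^sup>2 + (norm Q)\<^sup>2)"
    using assms by simp
  then show ?thesis
    unfolding entropy_def distrib_left expand by (simp add: algebra_simps)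
qed

theorem mainTheorem2:
  fixes nx ny :: nat and dx dy dt :: real
    and K F F0 :: "real \<Rightarrow> real" and iface :: "real \<Rightarrow> real \<Rightarrow> real"
    and c1 c2 :: "real grid"
    and \<rho> \<rho>' :: "real grid" and u w u' w' :: "(real \<times> real) grid"
  assumes grid: "0 < nx" "0 < ny" "0 < dx" "0 < dy" "0 < dt"
    and K_smooth: "smooth_on {0<..} K" and K_pos: "\<forall>r>0. K r > 0"
    and F_deriv: "\<forall>r>0. (F has_real_derivative sqrt (K r * r)) (at r)"
    and F0_smooth: "smooth_on {0<..} F0"
    and rho_pos: "\<forall>i<nx. \<forall>j<ny. \<rho> i j > 0"
    and hyp_stable:
      "\<forall>\<rho>h uh wh. (\<forall>i<nx. \<forall>j<ny. \<rho>h i j > 0) \<longrightarrow>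
         step_eqs nx ny dx dy dt (\<lambda>r. r * deriv F0 r - F0 r) c1 c2 \<rho> u w \<rho>h uh wh
                  (\<lambda>i j. 0) (\<lambda>i j. 0) \<longrightarrow>
         total_entropy nx ny F0 \<rho>h uh wh \<le> total_entropy nx ny F0 \<rho> u w"
    and rho'_pos: "\<forall>i<nx. \<forall>j<ny. \<rho>' i j > 0"
    and scheme:
      "step_eqs nx ny dx dy dt (\<lambda>r. r * deriv F0 r - F0 r) c1 c2 \<rho> u w \<rho>' u' w'
         (capT nx ny dx dy F (\<lambda>r. sqrt (K r * r)) iface \<rho>' w')
         (\<lambda>i j. - capT nx ny dx dy F (\<lambda>r. sqrt (K r * r)) iface \<rho>' u' i j)"
  shows "total_entropy nx ny F0 \<rho>' u' w' \<le> total_entropy nx ny F0 \<rho> u w"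
proof -
  let ?T = "capT nx ny dx dy F (\<lambda>r. sqrt (K r * r)) iface \<rho>'"
  define uh where "uh i j = u' i j - (dt / \<rho>' i j) *\<^sub>R ?T w' i j" for i j
  define wh where "wh i j = w' i j - (dt / \<rho>' i j) *\<^sub>R -?T u' i j" for i j
  have "\<forall>i<nx. \<forall>j<ny. \<rho>' i j \<noteq> 0"
    using rho'_pos by fastforce
  then have "step_eqs nx ny dx dy dt (\<lambda>r. r * deriv F0 r - F0 r) c1 c2 \<rho> u w \<rho>' uh wh
          (\<lambda>i j. 0) (\<lambda>i j. 0)"
    unfolding uh_def wh_def using step_eqs_absorb_rhs[OF scheme] grid by simp
  then have hyperbolic_bound: "total_entropy nx ny F0 \<rho>' uh wh \<le> total_entropy nx ny F0 \<rho> u w"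
    using hyp_stable rho'_pos by blast
  have "(\<Sum>i<nx. \<Sum>j<ny. u' i j \<bullet> ?T w' i j + w' i j \<bullet> -?T u' i j) = 0"
    using grid_sum_inner_capT_symmetric[OF grid(1,2), of u' _ _ _ _ _ _ w']
    by (simp add: sum_subtractf)
  then have "total_entropy nx ny F0 \<rho>' u' w'
      = (\<Sum>i<nx. \<Sum>j<ny. entropy F0 (\<rho>' i j) (u' i j) (w' i j)
                             - dt * (u' i j \<bullet> ?T w' i j + w' i j \<bullet> -?T u' i j))"
    unfolding total_entropy_def by (simp add: sum_subtractf flip: sum_distrib_left)
  also have "\<dots> \<le> total_entropy nx ny F0 \<rho>' uh wh"
    unfolding total_entropy_def uh_def wh_def
    by (intro sum_mono entropy_shift_ge) (use rho'_pos in auto)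
  finally show ?thesis
    using hyperbolic_bound by linarith
qed

end
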